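(* Let $G\subset\mathbb{R}^n$ be a convex body and let $K,L$ be compact convex subsets of $G$. Then there exist $u\in\mathbb{S}^{n-1}$ and either a point $q\in L$ such that $$\mathrm{int}\big(C_G(u,d_{\mathcal H}(K,L))+q\big)\subset (G+K\,\widetilde{\cup}\,L)\setminus(G+K),$$ or a point $q\in K$ such that $$\mathrm{int}\big(C_G(u,d_{\mathcal H}(K,L))+q\big)\subset (G+K\,\widetilde{\cup}\,L)\setminus(G+L).$$
   Context: A convex body is a compact convex set with non-empty interior. $K\,\widetilde{\cup}\,L$ is the closed convex hull of $K\cup L$; sums are Minkowski sums; $\mathrm{int}$ denotes Euclidean interior. $d_{\mathcal H}$ is the Hausdorff distance. The support function is $h_G(x)=\max\{y\cdot x: y\in G\}$, and for $u\in\mathbb{S}^{n-1}$ and $h\ge 0$ the cap of $G$ in direction $u$ with height $h$ is $C_G(u,h)=\{x\in G: u\cdot x\ge h_G(u)-h\}$. *)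

theory Defs
  imports "HOL-Analysis.Analysis"
begin

definition support_fun :: "'a::euclidean_space set \<Rightarrow> 'a \<Rightarrow> real" where
  "support_fun G x = (SUP y\<in>G. y \<bullet> x)"

definition cap :: "'a::euclidean_space set \<Rightarrow> 'a \<Rightarrow> real \<Rightarrow> 'a set" where
  "cap G u h = {x \<in> G. u \<bullet> x \<ge> support_fun G u - h}"

definition hausdorff_dist :: "'a::euclidean_space set \<Rightarrow> 'a set \<Rightarrow> real" where
  "hausdorff_dist K L = max (SUP x\<in>K. infdist x L) (SUP y\<in>L. infdist y K)"

definition conv_union :: "'a::euclidean_space set \<Rightarrow> 'a set \<Rightarrow> 'a set" where
  "conv_union K L = closure (convex hull (K \<union> L))"

end

theory Submission
  imports Defs
begin

text \<open>Say the Hausdorff distance d is attained as the distance from a point p of L to K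
  (otherwise swap K and L). If k is the point of K nearest to p, the unit vector
  u = (p - k)/d puts K into the halfspace u \<bullet> x \<le> u \<bullet> p - d, so G + K lies in
  u \<bullet> x \<le> h_G(u) + u \<bullet> p - d. The cap translated by p lies in G + L, and its interior in the
  open halfspace u \<bullet> x > h_G(u) + u \<bullet> p - d. If d = 0 then K \<subseteq> L, and any u works
  with p a maximiser of u on L.\<close>

lemma inner_le_support_fun:
  fixes G :: "'a::euclidean_space set"
  assumes "bounded G" and "g \<in> G"
  shows "g \<bullet> u \<le> support_fun G u"
proof -
  have "bounded ((\<lambda>y. y \<bullet> u) ` G)"
    using assms(1) bounded_linear_inner_left by (rule bounded_linear_image)
  then show ?thesis
    unfolding support_fun_def using assms(2) by (intro cSUP_upper bounded_imp_bdd_above)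
qed

lemma hausdorff_dist_commute: "hausdorff_dist K L = hausdorff_dist L K"
  by (simp add: hausdorff_dist_def max.commute)

lemma conv_union_commute: "conv_union K L = conv_union L K"
  by (simp add: conv_union_def Un_commute)

lemma subset_conv_union_right: "L \<subseteq> conv_union K L"
  unfolding conv_union_def by (meson Un_upper2 closure_subset hull_subset subset_trans)

lemma hausdorff_dist_attained:
  fixes K L :: "'a::euclidean_space set"
  assumes "compact L" and "L \<noteq> {}"
    and "(SUP y\<in>K. infdist y L) \<le> (SUP x\<in>L. infdist x K)"
  shows "\<exists>p\<in>L. hausdorff_dist K L = infdist p K"
proof -
  have "continuous_on L (\<lambda>x. infdist x K)"
    by (rule continuous_on_infdist[OF continuous_on_id])
  then obtain p where p: "p \<in> L" "\<forall>x\<in>L. infdist x K \<le> infdist p K"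
    using continuous_attains_sup[OF assms(1,2)] by blast
  then have "(SUP x\<in>L. infdist x K) = infdist p K"
    by (intro antisym cSUP_least cSUP_upper2[where x=p]) (auto intro: bdd_aboveI2)
  with p(1) assms(3) show ?thesis
    unfolding hausdorff_dist_def by auto
qed

lemma hausdorff_dist_eq_0_imp_subset:
  fixes K L :: "'a::euclidean_space set"
  assumes "compact K" and "closed L" and "L \<noteq> {}" and "hausdorff_dist K L = 0"
  shows "K \<subseteq> L"
proof
  fix y assume "y \<in> K"
  have "bdd_above ((\<lambda>y. infdist y L) ` K)"
    using assms(1) by (intro bounded_imp_bdd_above compact_imp_bounded compact_continuous_image)
      (auto intro: continuous_intros)
  with \<open>y \<in> K\<close> have "infdist y L \<le> hausdorff_dist K L"
    unfolding hausdorff_dist_def by (meson cSUP_upper max.coboundedI1 order_trans)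
  with assms(4) have "infdist y L = 0"
    using infdist_nonneg[of y L] by linarith
  then show "y \<in> L"
    using in_closed_iff_infdist_zero[OF assms(2,3)] by blast
qed

lemma halfspace_separation_infdist:
  fixes K :: "'a::euclidean_space set"
  assumes "closed K" and "convex K" and "K \<noteq> {}" and "p \<notin> K"
  shows "\<exists>u\<in>sphere 0 1. \<forall>x\<in>K. u \<bullet> x \<le> u \<bullet> p - infdist p K"
proof -
  obtain k where k: "k \<in> K" "infdist p K = dist p k"
    using infdist_attains_inf[OF assms(1,3)] by blast
  define d where "d = dist p k"
  have "d > 0"
    using infdist_pos_not_in_closed[OF assms(1,3,4)] k(2) d_def by simp
  have norm_pk: "norm (p - k) = d"
    by (simp add: d_def dist_norm)
  define u where "u = (p - k) /\<^sub>R d"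
  have "u \<in> sphere 0 1"
    using \<open>d > 0\<close> norm_pk by (simp add: u_def)
  moreover have "u \<bullet> x \<le> u \<bullet> p - d" if "x \<in> K" for x
  proof -
    have "(p - k) \<bullet> (x - k) \<le> 0"
      using any_closest_point_dot[OF assms(2,1) k(1) that] k infdist_le by metis
    moreover have "(p - k) \<bullet> (p - k) = d * d"
      using norm_pk by (metis power2_eq_square power2_norm_eq_inner)
    ultimately have "(p - k) \<bullet> x \<le> (p - k) \<bullet> p - d * d"
      by (simp add: inner_diff_right)
    then have "((p - k) \<bullet> x) / d \<le> ((p - k) \<bullet> p) / d - d"
      using \<open>d > 0\<close> by (simp add: field_simps)
    moreover have "u \<bullet> y = ((p - k) \<bullet> y) / d" for y
      by (simp add: u_def divide_inverse mult.commute)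
    ultimately show ?thesis
      by simp
  qed
  ultimately show ?thesis
    unfolding k(2) d_def by blast
qed

lemma exists_separating_direction:
  fixes K L :: "'a::euclidean_space set"
  assumes "compact K" and "convex K" and "K \<noteq> {}" and "compact L" and "L \<noteq> {}"
    and "(SUP y\<in>K. infdist y L) \<le> (SUP x\<in>L. infdist x K)"
  shows "\<exists>u\<in>sphere 0 1. \<exists>p\<in>L. \<forall>k\<in>K. u \<bullet> k \<le> u \<bullet> p - hausdorff_dist K L"
proof -
  obtain p where "p \<in> L" and hd: "hausdorff_dist K L = infdist p K"
    using hausdorff_dist_attained[OF assms(4-6)] by blast
  show ?thesis
  proof (cases "p \<in> K")
    case True
    then have "hausdorff_dist K L = 0"
      using hd by simp
    then have "K \<subseteq> L"
      using hausdorff_dist_eq_0_imp_subset assms(1,4,5) compact_imp_closed by blast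
    obtain b :: 'a where b: "b \<in> Basis"
      using nonempty_Basis by blast
    have "continuous_on L (\<lambda>x. b \<bullet> x)"
      by (intro continuous_intros)
    then obtain q where "q \<in> L" "\<forall>x\<in>L. b \<bullet> x \<le> b \<bullet> q"
      using continuous_attains_sup[OF assms(4,5)] by blast
    with \<open>K \<subseteq> L\<close> \<open>hausdorff_dist K L = 0\<close>
    have "\<forall>k\<in>K. b \<bullet> k \<le> b \<bullet> q - hausdorff_dist K L"
      by auto
    moreover have "b \<in> sphere 0 1"
      using b by simp
    ultimately show ?thesis
      using \<open>q \<in> L\<close> by blast
  next
    case False
    then obtain u where "u \<in> sphere 0 1" "\<forall>x\<in>K. u \<bullet> x \<le> u \<bullet> p - infdist p K"
      using halfspace_separation_infdist[OF compact_imp_closed[OF assms(1)] assms(2,3)] by blast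
    with \<open>p \<in> L\<close> show ?thesis
      unfolding hd by blast
  qed
qed

lemma interior_translated_cap_disjoint_sum:
  fixes G K :: "'a::euclidean_space set"
  assumes "bounded G" and "u \<noteq> 0" and "\<forall>k\<in>K. u \<bullet> k \<le> u \<bullet> p - d"
  shows "interior ((\<lambda>x. x + p) ` cap G u d) \<inter> (G + K) = {}"
proof -
  let ?c = "support_fun G u + u \<bullet> p - d"
  have "(\<lambda>x. x + p) ` cap G u d \<subseteq> {w. ?c \<le> u \<bullet> w}"
    by (auto simp: cap_def inner_add_right)
  then have "interior ((\<lambda>x. x + p) ` cap G u d) \<subseteq> interior {w. ?c \<le> u \<bullet> w}"
    by (rule interior_mono)
  also have "\<dots> = {w. ?c < u \<bullet> w}"
    using assms(2) by simp
  finally have "interior ((\<lambda>x. x + p) ` cap G u d) \<subseteq> {w. ?c < u \<bullet> w}" .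
  moreover have "G + K \<subseteq> {w. u \<bullet> w \<le> ?c}"
  proof
    fix w assume "w \<in> G + K"
    then obtain g k where "w = g + k" "g \<in> G" "k \<in> K"
      by (rule set_plus_elim)
    then show "w \<in> {w. u \<bullet> w \<le> ?c}"
      using inner_le_support_fun[OF assms(1), of g u] assms(3)
      by (auto simp: inner_add_right inner_commute)
  qed
  ultimately show ?thesis
    by force
qed

lemma interior_translated_cap_subset:
  fixes G K L :: "'a::euclidean_space set"
  assumes "bounded G" and "p \<in> L" and "u \<noteq> 0" and "\<forall>k\<in>K. u \<bullet> k \<le> u \<bullet> p - d"
  shows "interior ((\<lambda>x. x + p) ` cap G u d) \<subseteq> (G + conv_union K L) - (G + K)"
proof -
  have "(\<lambda>x. x + p) ` cap G u d \<subseteq> G + conv_union K L"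
    using assms(2) subset_conv_union_right by (auto simp: cap_def)
  moreover have "interior ((\<lambda>x. x + p) ` cap G u d) \<subseteq> (\<lambda>x. x + p) ` cap G u d"
    by (rule interior_subset)
  ultimately show ?thesis
    using interior_translated_cap_disjoint_sum[OF assms(1,3,4)] by blast
qed

theorem lemma3p5:
  fixes G K L :: "'a::euclidean_space set"
  assumes "compact G" and "convex G" and "interior G \<noteq> {}"
    and "compact K" and "convex K" and "K \<noteq> {}" and "K \<subseteq> G"
    and "compact L" and "convex L" and "L \<noteq> {}" and "L \<subseteq> G"
  shows "\<exists>u \<in> sphere 0 1.
    (\<exists>q \<in> L. interior ((\<lambda>x. x + q) ` cap G u (hausdorff_dist K L))
               \<subseteq> (G + conv_union K L) - (G + K))
  \<or> (\<exists>q \<in> K. interior ((\<lambda>x. x + q) ` cap G u (hausdorff_dist K L))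
               \<subseteq> (G + conv_union K L) - (G + L))"
proof (cases "(SUP y\<in>K. infdist y L) \<le> (SUP x\<in>L. infdist x K)")
  case True
  then obtain u p where u: "u \<in> sphere 0 1" and "p \<in> L"
    and sep: "\<forall>k\<in>K. u \<bullet> k \<le> u \<bullet> p - hausdorff_dist K L"
    using exists_separating_direction[OF assms(4-6,8,10)] by blast
  have "u \<noteq> 0"
    using u by auto
  with \<open>p \<in> L\<close> sep have "interior ((\<lambda>x. x + p) ` cap G u (hausdorff_dist K L))
      \<subseteq> (G + conv_union K L) - (G + K)"
    by (intro interior_translated_cap_subset compact_imp_bounded assms(1))
  with u \<open>p \<in> L\<close> show ?thesis
    by blast
next
  case False
  then have "(SUP y\<in>L. infdist y K) \<le> (SUP x\<in>K. infdist x L)"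
    by linarith
  then obtain u p where u: "u \<in> sphere 0 1" and "p \<in> K"
    and sep: "\<forall>k\<in>L. u \<bullet> k \<le> u \<bullet> p - hausdorff_dist L K"
    using exists_separating_direction[OF assms(8-10,4,6)] by blast
  have "u \<noteq> 0"
    using u by auto
  with \<open>p \<in> K\<close> sep have "interior ((\<lambda>x. x + p) ` cap G u (hausdorff_dist L K))
      \<subseteq> (G + conv_union L K) - (G + L)"
    by (intro interior_translated_cap_subset compact_imp_bounded assms(1))
  with u \<open>p \<in> K\<close> show ?thesis
    unfolding hausdorff_dist_commute[of L K] conv_union_commute[of L K] by blast
qed

end
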